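(* Let $\Gamma$ be a skew-symmetric graph which has the Kahan-Poisson property. Then every induced subgraph $\Gamma'$ of $\Gamma$ (on a non-empty vertex subset) has the Kahan-Poisson property.
   Context: $\mathbb F\in\{\mathbb R,\mathbb C\}$. A skew-symmetric graph is $\Gamma=(S,A)$, $S=\{1,\dots,n\}$, $A=(a_{i,j})$ skew-symmetric over $\mathbb F$; the induced subgraph on $S'\subset S$ is $(S',A|_{S'\times S'})$. Its Poisson bracket on $\mathbb F(x)$ is $\{x_i,x_j\}=a_{i,j}x_ix_j$; its Kahan morphism is $K(x_i)=\tilde x_i$ with $\tilde x_i$ the unique solution of $\tilde x_i-x_i=\tilde x_i\sum_ja_{i,j}x_j+x_i\sum_ja_{i,j}\tilde x_j$; $\Gamma$ has the Kahan-Poisson property if $\{\tilde x_i,\tilde x_j\}=a_{i,j}\tilde x_i\tilde x_j$ for all $i,j$. *)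

theory Defs
  imports "HOL-Analysis.Analysis"
begin

text \<open>A skew-symmetric graph (S, A): a finite non-empty vertex set S (of naturals) and
  a matrix A (only its entries on S x S matter) that is skew-symmetric on S.\<close>

definition skew_graph :: "nat set \<Rightarrow> (nat \<Rightarrow> nat \<Rightarrow> 'a::real_normed_field) \<Rightarrow> bool" where
  "skew_graph S A \<longleftrightarrow> finite S \<and> S \<noteq> {} \<and> (\<forall>i\<in>S. \<forall>j\<in>S. A i j = - A j i)"

definition kahan_eqs :: "nat set \<Rightarrow> (nat \<Rightarrow> nat \<Rightarrow> 'a::real_normed_field) \<Rightarrow> (nat \<Rightarrow> 'a) \<Rightarrow> (nat \<Rightarrow> 'a) \<Rightarrow> bool" where
  "kahan_eqs S A x y \<longleftrightarrow> (\<forall>i. i \<notin> S \<longrightarrow> y i = 0) \<and>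
     (\<forall>i\<in>S. y i - x i = y i * (\<Sum>j\<in>S. A i j * x j) + x i * (\<Sum>j\<in>S. A i j * y j))"

text \<open>Points where the Kahan morphism (a rational map) is defined: the linear system
  has a unique solution.\<close>

definition kahan_defined :: "nat set \<Rightarrow> (nat \<Rightarrow> nat \<Rightarrow> 'a::real_normed_field) \<Rightarrow> (nat \<Rightarrow> 'a) \<Rightarrow> bool" where
  "kahan_defined S A x \<longleftrightarrow> (\<exists>!y. kahan_eqs S A x y)"

definition kahan :: "nat set \<Rightarrow> (nat \<Rightarrow> nat \<Rightarrow> 'a::real_normed_field) \<Rightarrow> (nat \<Rightarrow> 'a) \<Rightarrow> (nat \<Rightarrow> 'a)" where
  "kahan S A x = (THE y. kahan_eqs S A x y)"

definition partial :: "((nat \<Rightarrow> 'a::real_normed_field) \<Rightarrow> 'a) \<Rightarrow> nat \<Rightarrow> (nat \<Rightarrow> 'a) \<Rightarrow> 'a" where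
  "partial f k x = deriv (\<lambda>t. f (x(k := t))) (x k)"

text \<open>The log-canonical Poisson bracket {f,g}(x) = sum_{k,l} a_kl x_k x_l d_k f d_l g,
  i.e. the bracket determined by {x_k, x_l} = a_kl x_k x_l.\<close>

definition pbracket :: "nat set \<Rightarrow> (nat \<Rightarrow> nat \<Rightarrow> 'a::real_normed_field) \<Rightarrow>
    ((nat \<Rightarrow> 'a) \<Rightarrow> 'a) \<Rightarrow> ((nat \<Rightarrow> 'a) \<Rightarrow> 'a) \<Rightarrow> (nat \<Rightarrow> 'a) \<Rightarrow> 'a" where
  "pbracket S A f g x = (\<Sum>k\<in>S. \<Sum>l\<in>S. A k l * x k * x l * partial f k x * partial g l x)"

text \<open>Kahan-Poisson property: {K(x_i), K(x_j)} = a_ij K(x_i) K(x_j) as rational functions,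
  i.e. at every point where the Kahan morphism is defined.\<close>

definition kahan_poisson :: "nat set \<Rightarrow> (nat \<Rightarrow> nat \<Rightarrow> 'a::real_normed_field) \<Rightarrow> bool" where
  "kahan_poisson S A \<longleftrightarrow>
     (\<forall>x. kahan_defined S A x \<longrightarrow> (\<forall>i\<in>S. \<forall>j\<in>S.
        pbracket S A (\<lambda>z. kahan S A z i) (\<lambda>z. kahan S A z j) x
          = A i j * kahan S A x i * kahan S A x j))"

end

theory Submission
  imports Defs Jordan_Normal_Form.Determinant
begin

(* Let T be the vertex set of the induced subgraph. On the coordinate subspace x_l = 0 (l \<notin> T)
   the Kahan equation of the big graph with index l \<notin> T reads y_l (1 - (A x)_l) = 0. So wherever,
   in addition, (A x)_l \<noteq> 1 for all l \<in> S - T, the Kahan maps of S and of T agree near x along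
   the coordinate directions in T, and the Kahan-Poisson identity for S gives the one for T at x.
   By Cramer's rule the Kahan map of T is a quotient of polynomials whose denominator is the
   determinant of the linear system, so both sides of its Kahan-Poisson identity are continuous
   wherever it is defined. They depend only on the coordinates in T, and a point x of the subspace
   is the limit as s \<rightarrow> 0 of the points (1 + s) x, which satisfy the condition above for small
   s \<noteq> 0. *)

lemma ex1_bij_betw_iff:
  assumes "bij_betw h A B"
  shows "(\<exists>!x. x \<in> A \<and> P (h x)) \<longleftrightarrow> (\<exists>!y. y \<in> B \<and> P y)"
  using assms unfolding bij_betw_def inj_on_def by blast

lemma ball_bij_betw_iff:
  assumes "bij_betw h A B"
  shows "(\<forall>x\<in>A. P (h x)) \<longleftrightarrow> (\<forall>y\<in>B. P y)"
  using assms unfolding bij_betw_def by auto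

lemma bij_betw_sorted_list_of_set_nth:
  "finite T \<Longrightarrow> bij_betw ((!) (sorted_list_of_set T)) {..<card T} T"
  by (rule bij_betw_nth) auto

lemma isCont_eventually_neq:
  fixes f :: "'b::t2_space \<Rightarrow> 'c::t1_space"
  assumes "isCont f a" and "f a \<noteq> c"
  shows "eventually (\<lambda>x. f x \<noteq> c) (nhds a)"
  using assms by (intro tendsto_imp_eventually_ne) (simp_all add: tendsto_nhds_iff isContD)

lemma isCont_eq_if_eventually_eq:
  fixes f g :: "'a::{perfect_space,t2_space} \<Rightarrow> 'b::t2_space"
  assumes "isCont f a" and "isCont g a" and "eventually (\<lambda>x. f x = g x) (at a)"
  shows "f a = g a"
  using assms by (metis LIM_unique isContD tendsto_cong)

lemma isCont_fun_upd_apply: "isCont (\<lambda>t. (z(k := t)) l) a"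
  by (cases "l = k") auto

lemma unique_solution_iff_det_nonzero:
  fixes M :: "'a::field mat"
  assumes M: "M \<in> carrier_mat n n" and b: "b \<in> carrier_vec n"
  shows "(\<exists>!v. v \<in> carrier_vec n \<and> M *\<^sub>v v = b) \<longleftrightarrow> det M \<noteq> 0"
proof
  assume "\<exists>!v. v \<in> carrier_vec n \<and> M *\<^sub>v v = b"
  then obtain v where v: "v \<in> carrier_vec n" "M *\<^sub>v v = b"
    and unique: "\<And>w. w \<in> carrier_vec n \<Longrightarrow> M *\<^sub>v w = b \<Longrightarrow> w = v"
    by blast
  show "det M \<noteq> 0"
  proof
    assume "det M = 0"
    then obtain w where w: "w \<in> carrier_vec n" "w \<noteq> 0\<^sub>v n" "M *\<^sub>v w = 0\<^sub>v n"
      using det_0_iff_vec_prod_zero[OF M] by blast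
    have "M *\<^sub>v (v + w) = b"
      using M v w b by (simp add: mult_add_distrib_mat_vec)
    then have "v + w = v"
      using v w by (intro unique) auto
    then have "(v + w) $ i = v $ i" for i
      by simp
    then have "w $ i = 0" if "i < n" for i
      using v w that by (metis add_cancel_right_right carrier_vecD index_add_vec(1))
    then have "w = 0\<^sub>v n"
      using w(1) by (intro eq_vecI) auto
    with w(2) show False ..
  qed
next
  assume det: "det M \<noteq> 0"
  have adj: "adj_mat M \<in> carrier_mat n n" "M * adj_mat M = det M \<cdot>\<^sub>m 1\<^sub>m n"
    using adj_mat[OF M] by auto
  define v where "v = (1 / det M) \<cdot>\<^sub>v (adj_mat M *\<^sub>v b)"
  have v: "v \<in> carrier_vec n"
    unfolding v_def using adj b by simp
  have "M *\<^sub>v v = (1 / det M) \<cdot>\<^sub>v ((M * adj_mat M) *\<^sub>v b)"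
    unfolding v_def using M adj(1) b by (simp add: mult_mat_vec)
  also have "\<dots> = b"
  proof -
    have "(det M \<cdot>\<^sub>m 1\<^sub>m n) *\<^sub>v b = det M \<cdot>\<^sub>v b"
      using b by auto
    then show ?thesis
      using det b unfolding adj(2) by (simp add: smult_smult_assoc)
  qed
  finally have sol: "M *\<^sub>v v = b" .
  have "w = v" if w: "w \<in> carrier_vec n" "M *\<^sub>v w = b" for w
  proof -
    have "M *\<^sub>v (w - v) = 0\<^sub>v n"
      using M v w sol b by (simp add: mult_minus_distrib_mat_vec)
    then have "w - v = 0\<^sub>v n"
      using det_0_iff_vec_prod_zero[OF M] det minus_carrier_vec[OF w(1) v] by blast
    then show "w = v"
      using v w by (metis eq_vecI carrier_vecD index_minus_vec(1) index_zero_vec(1) right_minus_eq)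
  qed
  with sol v show "\<exists>!v. v \<in> carrier_vec n \<and> M *\<^sub>v v = b"
    by blast
qed

section \<open>Polynomial functions of the coordinates\<close>

inductive_set poly_fun :: "(('i \<Rightarrow> 'a::comm_ring_1) \<Rightarrow> 'a) set" where
  poly_fun_const: "(\<lambda>x. c) \<in> poly_fun"
| poly_fun_coord: "(\<lambda>x. x k) \<in> poly_fun"
| poly_fun_add: "f \<in> poly_fun \<Longrightarrow> g \<in> poly_fun \<Longrightarrow> (\<lambda>x. f x + g x) \<in> poly_fun"
| poly_fun_mult: "f \<in> poly_fun \<Longrightarrow> g \<in> poly_fun \<Longrightarrow> (\<lambda>x. f x * g x) \<in> poly_fun"

lemma poly_fun_minus:
  assumes "f \<in> poly_fun"
  shows "(\<lambda>x. - f x) \<in> poly_fun"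
proof -
  have "(\<lambda>x. (- 1) * f x) \<in> poly_fun"
    using assms by (intro poly_fun_mult poly_fun_const)
  then show ?thesis
    by simp
qed

lemma poly_fun_diff:
  assumes "f \<in> poly_fun" and "g \<in> poly_fun"
  shows "(\<lambda>x. f x - g x) \<in> poly_fun"
  using poly_fun_add[OF assms(1) poly_fun_minus[OF assms(2)]] by simp

lemma poly_fun_sum:
  "finite I \<Longrightarrow> (\<And>i. i \<in> I \<Longrightarrow> f i \<in> poly_fun) \<Longrightarrow> (\<lambda>x. \<Sum>i\<in>I. f i x) \<in> poly_fun"
  by (induction I rule: finite_induct) (auto intro: poly_fun_const poly_fun_add)

lemma poly_fun_prod:
  "finite I \<Longrightarrow> (\<And>i. i \<in> I \<Longrightarrow> f i \<in> poly_fun) \<Longrightarrow> (\<lambda>x. \<Prod>i\<in>I. f i x) \<in> poly_fun"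
  by (induction I rule: finite_induct) (auto intro: poly_fun_const poly_fun_mult)

lemma poly_fun_det:
  assumes "\<And>x. F x \<in> carrier_mat n n"
    and "\<And>r c. r < n \<Longrightarrow> c < n \<Longrightarrow> (\<lambda>x. F x $$ (r, c)) \<in> poly_fun"
  shows "(\<lambda>x. det (F x)) \<in> poly_fun"
proof -
  have "det (F x) = (\<Sum>p\<in>{p. p permutes {0..<n}}. signof p * (\<Prod>i\<in>{0..<n}. F x $$ (i, p i)))"
    for x using assms(1)[of x] unfolding det_def by auto
  moreover have "(\<lambda>x. \<Sum>p\<in>{p. p permutes {0..<n}}. signof p * (\<Prod>i\<in>{0..<n}. F x $$ (i, p i)))
      \<in> poly_fun"
    using assms(2) by (intro poly_fun_sum poly_fun_mult poly_fun_const poly_fun_prod finite_permutations)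
      (auto simp: permutes_in_image)
  ultimately show ?thesis
    by simp
qed

lemma isCont_poly_fun:
  fixes f :: "('i \<Rightarrow> 'a::real_normed_field) \<Rightarrow> 'a"
  shows "f \<in> poly_fun \<Longrightarrow> (\<And>k. isCont (\<lambda>s. \<gamma> s k) a) \<Longrightarrow> isCont (\<lambda>s. f (\<gamma> s)) a"
  by (induction f rule: poly_fun.induct) (auto intro!: continuous_intros)

lemma poly_fun_has_partial_derivative:
  fixes f :: "('i \<Rightarrow> 'a::real_normed_field) \<Rightarrow> 'a"
  assumes "f \<in> poly_fun"
  shows "\<exists>f'\<in>poly_fun. \<forall>x t. ((\<lambda>t. f (x(k := t))) has_field_derivative f' (x(k := t))) (at t)"
  using assms
proof (induction f rule: poly_fun.induct)
  case (poly_fun_const c)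
  show ?case
    by (intro bexI[of _ "\<lambda>x. 0"] poly_fun.poly_fun_const) auto
next
  case (poly_fun_coord j)
  show ?case
    by (intro bexI[of _ "\<lambda>x. if j = k then 1 else 0"] poly_fun.poly_fun_const)
      (auto intro!: derivative_eq_intros)
next
  case (poly_fun_add f g)
  then obtain f' g' where "f' \<in> poly_fun" "g' \<in> poly_fun"
    and "\<forall>x t. ((\<lambda>t. f (x(k := t))) has_field_derivative f' (x(k := t))) (at t)"
    and "\<forall>x t. ((\<lambda>t. g (x(k := t))) has_field_derivative g' (x(k := t))) (at t)"
    by blast
  then show ?case
    by (intro bexI[of _ "\<lambda>x. f' x + g' x"] poly_fun.poly_fun_add allI DERIV_add) blast+
next
  case (poly_fun_mult f g)
  then obtain f' g' where "f' \<in> poly_fun" "g' \<in> poly_fun"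
    and "\<forall>x t. ((\<lambda>t. f (x(k := t))) has_field_derivative f' (x(k := t))) (at t)"
    and "\<forall>x t. ((\<lambda>t. g (x(k := t))) has_field_derivative g' (x(k := t))) (at t)"
    by blast
  with poly_fun_mult.hyps show ?case
    by (intro bexI[of _ "\<lambda>x. f' x * g x + g' x * f x"] poly_fun.poly_fun_add
        poly_fun.poly_fun_mult allI DERIV_mult) blast+
qed

lemma partial_poly_quotient:
  fixes p q :: "(nat \<Rightarrow> 'a::real_normed_field) \<Rightarrow> 'a"
  assumes p: "p \<in> poly_fun" and q: "q \<in> poly_fun"
    and f: "\<And>w. q w \<noteq> 0 \<Longrightarrow> f w = p w / q w"
  obtains p' q' where "p' \<in> poly_fun" and "q' \<in> poly_fun"
    and "\<And>w. q w \<noteq> 0 \<Longrightarrow> partial f k w = (p' w * q w - p w * q' w) / (q w * q w)"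
proof -
  obtain p' where p': "p' \<in> poly_fun"
    and dp: "\<And>x t. ((\<lambda>t. p (x(k := t))) has_field_derivative p' (x(k := t))) (at t)"
    using poly_fun_has_partial_derivative[OF p] by blast
  obtain q' where q': "q' \<in> poly_fun"
    and dq: "\<And>x t. ((\<lambda>t. q (x(k := t))) has_field_derivative q' (x(k := t))) (at t)"
    using poly_fun_has_partial_derivative[OF q] by blast
  have "partial f k w = (p' w * q w - p w * q' w) / (q w * q w)" if w: "q w \<noteq> 0" for w
  proof -
    have dp_w: "((\<lambda>t. p (w(k := t))) has_field_derivative p' w) (at (w k))"
      using dp[of w "w k"] by simp
    have dq_w: "((\<lambda>t. q (w(k := t))) has_field_derivative q' w) (at (w k))"
      using dq[of w "w k"] by simp
    have "eventually (\<lambda>t. q (w(k := t)) \<noteq> 0) (nhds (w k))"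
      using isCont_eventually_neq[OF DERIV_isCont[OF dq_w]] w by simp
    then have "eventually (\<lambda>t. f (w(k := t)) = p (w(k := t)) / q (w(k := t))) (nhds (w k))"
      by eventually_elim (rule f)
    moreover have "((\<lambda>t. p (w(k := t)) / q (w(k := t))) has_field_derivative
        (p' w * q w - p w * q' w) / (q w * q w)) (at (w k))"
      using DERIV_divide[OF dp_w dq_w] w by simp
    ultimately have "((\<lambda>t. f (w(k := t))) has_field_derivative
        (p' w * q w - p w * q' w) / (q w * q w)) (at (w k))"
      by (simp add: DERIV_cong_ev)
    then show ?thesis
      unfolding partial_def by (rule DERIV_imp_deriv)
  qed
  with p' q' that show ?thesis
    by blast
qed

lemma isCont_poly_quotient:
  fixes p q :: "(nat \<Rightarrow> 'a::real_normed_field) \<Rightarrow> 'a" and \<gamma> :: "'b::t2_space \<Rightarrow> nat \<Rightarrow> 'a"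
  assumes p: "p \<in> poly_fun" and q: "q \<in> poly_fun"
    and f: "\<And>w. q w \<noteq> 0 \<Longrightarrow> f w = p w / q w"
    and q_nonzero: "q (\<gamma> a) \<noteq> 0" and \<gamma>: "\<And>l. isCont (\<lambda>s. \<gamma> s l) a"
  shows "isCont (\<lambda>s. f (\<gamma> s)) a" and "isCont (\<lambda>s. partial f k (\<gamma> s)) a"
proof -
  have cont: "isCont (\<lambda>s. g (\<gamma> s)) a" if "g \<in> poly_fun" for g
    using that \<gamma> by (rule isCont_poly_fun)
  have ev: "eventually (\<lambda>s. q (\<gamma> s) \<noteq> 0) (nhds a)"
    using isCont_eventually_neq[OF cont[OF q] q_nonzero] .
  have "eventually (\<lambda>s. f (\<gamma> s) = p (\<gamma> s) / q (\<gamma> s)) (nhds a)"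
    using ev by eventually_elim (rule f)
  moreover have "isCont (\<lambda>s. p (\<gamma> s) / q (\<gamma> s)) a"
    using q_nonzero by (intro continuous_intros cont p q)
  ultimately show "isCont (\<lambda>s. f (\<gamma> s)) a"
    by (simp add: isCont_cong)
  obtain p' q' where p': "p' \<in> poly_fun" and q': "q' \<in> poly_fun"
    and df: "\<And>w. q w \<noteq> 0 \<Longrightarrow> partial f k w = (p' w * q w - p w * q' w) / (q w * q w)"
    using partial_poly_quotient[OF p q f] by blast
  have "eventually (\<lambda>s. partial f k (\<gamma> s)
      = (p' (\<gamma> s) * q (\<gamma> s) - p (\<gamma> s) * q' (\<gamma> s)) / (q (\<gamma> s) * q (\<gamma> s))) (nhds a)"
    using ev by eventually_elim (rule df)
  moreover have "isCont (\<lambda>s. (p' (\<gamma> s) * q (\<gamma> s) - p (\<gamma> s) * q' (\<gamma> s))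
      / (q (\<gamma> s) * q (\<gamma> s))) a"
    using q_nonzero by (intro continuous_intros cont p q p' q') simp
  ultimately show "isCont (\<lambda>s. partial f k (\<gamma> s)) a"
    by (simp add: isCont_cong)
qed

section \<open>The Kahan map by Cramer's rule\<close>

definition vec_on :: "nat set \<Rightarrow> (nat \<Rightarrow> 'a) \<Rightarrow> 'a vec" where
  "vec_on T y = vec (card T) (\<lambda>r. y (sorted_list_of_set T ! r))"

lemma vec_on_carrier [simp]: "vec_on T y \<in> carrier_vec (card T)"
  by (simp add: vec_on_def)

lemma dim_vec_on [simp]: "dim_vec (vec_on T y) = card T"
  by (simp add: vec_on_def)

lemma index_vec_on [simp]: "r < card T \<Longrightarrow> vec_on T y $ r = y (sorted_list_of_set T ! r)"
  by (simp add: vec_on_def)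

lemma bij_betw_vec_on:
  assumes T: "finite T"
  shows "bij_betw (vec_on T) {y. \<forall>i. i \<notin> T \<longrightarrow> y i = 0} (carrier_vec (card T))"
proof -
  let ?e = "(!) (sorted_list_of_set T)"
  have e: "bij_betw ?e {..<card T} T"
    using T by (rule bij_betw_sorted_list_of_set_nth)
  have "inj_on (vec_on T) {y. \<forall>i. i \<notin> T \<longrightarrow> y i = 0}"
  proof (rule inj_onI)
    fix y z assume y: "y \<in> {y. \<forall>i. i \<notin> T \<longrightarrow> y i = 0}" and z: "z \<in> {y. \<forall>i. i \<notin> T \<longrightarrow> y i = 0}"
      and eq: "vec_on T y = vec_on T z"
    have "y (?e r) = z (?e r)" if "r < card T" for r
      using arg_cong[OF eq, of "\<lambda>v. v $ r"] that by simp
    then have on_T: "y i = z i" if "i \<in> T" for i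
      using ball_bij_betw_iff[OF e, of "\<lambda>i. y i = z i"] that by auto
    show "y = z"
    proof
      fix i
      show "y i = z i"
        using y z on_T by (cases "i \<in> T") auto
    qed
  qed
  moreover have "v \<in> vec_on T ` {y. \<forall>i. i \<notin> T \<longrightarrow> y i = 0}" if v: "v \<in> carrier_vec (card T)" for v
  proof
    let ?y = "\<lambda>i. if i \<in> T then v $ inv_into {..<card T} ?e i else 0"
    show "v = vec_on T ?y"
      using v e by (intro eq_vecI)
        (auto simp: vec_on_def bij_betw_def bij_betw_apply inv_into_f_f)
  qed auto
  ultimately show ?thesis
    unfolding bij_betw_def by auto
qed

(* Row i of the Kahan equations, rearranged as (1 - (A x)_i) y_i - x_i (A y)_i = x_i. *)
definition kahan_coeff :: "nat set \<Rightarrow> (nat \<Rightarrow> nat \<Rightarrow> 'a::comm_ring_1) \<Rightarrow> (nat \<Rightarrow> 'a) \<Rightarrow> nat \<Rightarrow> nat \<Rightarrow> 'a"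
  where "kahan_coeff T A x i j = (if i = j then 1 - (\<Sum>l\<in>T. A i l * x l) else 0) - x i * A i j"

definition kahan_mat :: "nat set \<Rightarrow> (nat \<Rightarrow> nat \<Rightarrow> 'a::comm_ring_1) \<Rightarrow> (nat \<Rightarrow> 'a) \<Rightarrow> 'a mat"
  where "kahan_mat T A x = mat (card T) (card T)
    (\<lambda>(r, c). kahan_coeff T A x (sorted_list_of_set T ! r) (sorted_list_of_set T ! c))"

lemma kahan_mat_carrier [simp]: "kahan_mat T A x \<in> carrier_mat (card T) (card T)"
  by (simp add: kahan_mat_def)

lemma dim_row_kahan_mat [simp]: "dim_row (kahan_mat T A x) = card T"
  by (simp add: kahan_mat_def)

lemma kahan_eq_iff_coeff:
  assumes "finite T" and "i \<in> T"
  shows "y i - x i = y i * (\<Sum>j\<in>T. A i j * x j) + x i * (\<Sum>j\<in>T. A i j * y j)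
    \<longleftrightarrow> (\<Sum>j\<in>T. kahan_coeff T A x i j * y j) = x i"
proof -
  have "(\<Sum>j\<in>T. kahan_coeff T A x i j * y j)
      = (\<Sum>j\<in>T. if i = j then (1 - (\<Sum>l\<in>T. A i l * x l)) * y j else 0) - (\<Sum>j\<in>T. x i * (A i j * y j))"
    unfolding kahan_coeff_def
    by (simp add: left_diff_distrib sum_subtractf mult.assoc if_distrib[of "\<lambda>v. v * _"] cong: if_cong)
  also have "\<dots> = (1 - (\<Sum>l\<in>T. A i l * x l)) * y i - x i * (\<Sum>j\<in>T. A i j * y j)"
    using assms by (simp add: sum_distrib_left)
  finally have coeff_sum: "(\<Sum>j\<in>T. kahan_coeff T A x i j * y j)
      = (1 - (\<Sum>l\<in>T. A i l * x l)) * y i - x i * (\<Sum>j\<in>T. A i j * y j)" .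
  show ?thesis
    unfolding coeff_sum by (auto simp: algebra_simps)
qed

lemma kahan_eqs_iff_mat_vec:
  assumes T: "finite T"
  shows "kahan_eqs T A x y \<longleftrightarrow>
    (\<forall>i. i \<notin> T \<longrightarrow> y i = 0) \<and> kahan_mat T A x *\<^sub>v vec_on T y = vec_on T x"
proof -
  let ?e = "(!) (sorted_list_of_set T)"
  have e: "bij_betw ?e {..<card T} T"
    using T by (rule bij_betw_sorted_list_of_set_nth)
  have row: "(kahan_mat T A x *\<^sub>v vec_on T y) $ r = (\<Sum>j\<in>T. kahan_coeff T A x (?e r) j * y j)"
    if "r < card T" for r
    using that sum.reindex_bij_betw[OF e, of "\<lambda>j. kahan_coeff T A x (?e r) j * y j"]
    by (simp add: kahan_mat_def vec_on_def scalar_prod_def atLeast0LessThan)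
  have "kahan_mat T A x *\<^sub>v vec_on T y = vec_on T x
      \<longleftrightarrow> (\<forall>r\<in>{..<card T}. (\<Sum>j\<in>T. kahan_coeff T A x (?e r) j * y j) = x (?e r))"
    by (auto simp: vec_eq_iff row simp del: index_mult_mat_vec)
  also have "\<dots> \<longleftrightarrow> (\<forall>i\<in>T. (\<Sum>j\<in>T. kahan_coeff T A x i j * y j) = x i)"
    by (rule ball_bij_betw_iff[OF e])
  also have "\<dots> \<longleftrightarrow>
      (\<forall>i\<in>T. y i - x i = y i * (\<Sum>j\<in>T. A i j * x j) + x i * (\<Sum>j\<in>T. A i j * y j))"
    using kahan_eq_iff_coeff[OF T] by blast
  finally show ?thesis
    unfolding kahan_eqs_def by blast
qed

lemma kahan_defined_iff_det:
  assumes T: "finite T"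
  shows "kahan_defined T A x \<longleftrightarrow> det (kahan_mat T A x) \<noteq> 0"
proof -
  have "kahan_defined T A x \<longleftrightarrow> (\<exists>!y. y \<in> {y. \<forall>i. i \<notin> T \<longrightarrow> y i = 0}
      \<and> kahan_mat T A x *\<^sub>v vec_on T y = vec_on T x)"
    unfolding kahan_defined_def kahan_eqs_iff_mat_vec[OF T] by simp
  also have "\<dots> \<longleftrightarrow> (\<exists>!v. v \<in> carrier_vec (card T) \<and> kahan_mat T A x *\<^sub>v v = vec_on T x)"
    using bij_betw_vec_on[OF T] by (rule ex1_bij_betw_iff)
  also have "\<dots> \<longleftrightarrow> det (kahan_mat T A x) \<noteq> 0"
    by (simp add: unique_solution_iff_det_nonzero)
  finally show ?thesis .
qed

lemma kahan_cramer:
  assumes T: "finite T" and det: "det (kahan_mat T A x) \<noteq> 0" and r: "r < card T"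
  shows "kahan T A x (sorted_list_of_set T ! r)
    = det (replace_col (kahan_mat T A x) (vec_on T x) r) / det (kahan_mat T A x)"
proof -
  have "\<exists>!y. kahan_eqs T A x y"
    using det kahan_defined_iff_det[OF T] unfolding kahan_defined_def by blast
  then have "kahan_eqs T A x (kahan T A x)"
    unfolding kahan_def by (rule theI')
  then have "kahan_mat T A x *\<^sub>v vec_on T (kahan T A x) = vec_on T x"
    unfolding kahan_eqs_iff_mat_vec[OF T] by blast
  then have "det (replace_col (kahan_mat T A x) (vec_on T x) r)
      = vec_on T (kahan T A x) $ r * det (kahan_mat T A x)"
    using cramer_lemma_mat[OF kahan_mat_carrier vec_on_carrier r, of A x "kahan T A x"] by simp
  with det r show ?thesis
    by simp
qed

lemma poly_fun_kahan_coeff: "finite T \<Longrightarrow> (\<lambda>x. kahan_coeff T A x i j) \<in> poly_fun"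
  unfolding kahan_coeff_def
  by (cases "i = j")
    (auto intro!: poly_fun_diff poly_fun_minus poly_fun_mult poly_fun_const poly_fun_coord poly_fun_sum)

lemma poly_fun_det_kahan_mat: "finite T \<Longrightarrow> (\<lambda>x. det (kahan_mat T A x)) \<in> poly_fun"
  by (rule poly_fun_det[of _ "card T"]) (simp_all add: kahan_mat_def poly_fun_kahan_coeff)

lemma poly_fun_det_replace_col_kahan_mat:
  assumes "finite T"
  shows "(\<lambda>x. det (replace_col (kahan_mat T A x) (vec_on T x) r)) \<in> poly_fun"
proof (rule poly_fun_det[of _ "card T"])
  fix a c assume "a < card T" "c < card T"
  then show "(\<lambda>x. replace_col (kahan_mat T A x) (vec_on T x) r $$ (a, c)) \<in> poly_fun"
    using assms by (cases "c = r")
      (simp_all add: replace_col_def kahan_mat_def poly_fun_coord poly_fun_kahan_coeff)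
qed (simp add: replace_col_def kahan_mat_def)

lemma kahan_poly_quotient:
  assumes T: "finite T" and i: "i \<in> T"
  obtains p where "p \<in> poly_fun"
    and "\<And>w. det (kahan_mat T A w) \<noteq> 0 \<Longrightarrow> kahan T A w i = p w / det (kahan_mat T A w)"
proof -
  obtain r where r: "r < card T" "i = sorted_list_of_set T ! r"
    using bij_betw_sorted_list_of_set_nth[OF T] i unfolding bij_betw_def by auto
  show thesis
    using that[OF poly_fun_det_replace_col_kahan_mat[OF T]] kahan_cramer[OF T _ r(1)] r(2) by blast
qed

lemma isCont_kahan:
  fixes \<gamma> :: "'b::t2_space \<Rightarrow> nat \<Rightarrow> 'a::real_normed_field"
  assumes T: "finite T" and i: "i \<in> T" and det: "det (kahan_mat T A (\<gamma> a)) \<noteq> 0"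
    and \<gamma>: "\<And>l. isCont (\<lambda>s. \<gamma> s l) a"
  shows "isCont (\<lambda>s. kahan T A (\<gamma> s) i) a"
    and "isCont (\<lambda>s. partial (\<lambda>w. kahan T A w i) k (\<gamma> s)) a"
proof -
  obtain p where "p \<in> poly_fun"
    and "\<And>w. det (kahan_mat T A w) \<noteq> 0 \<Longrightarrow> kahan T A w i = p w / det (kahan_mat T A w)"
    using kahan_poly_quotient[OF T i] by blast
  from isCont_poly_quotient[OF this(1) poly_fun_det_kahan_mat[OF T] this(2) det \<gamma>]
  show "isCont (\<lambda>s. kahan T A (\<gamma> s) i) a"
    and "isCont (\<lambda>s. partial (\<lambda>w. kahan T A w i) k (\<gamma> s)) a"
    by blast+
qed

lemma isCont_pbracket:
  assumes "finite T" and "\<And>l. isCont (\<lambda>s. \<gamma> s l) a"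
    and "\<And>k. isCont (\<lambda>s. partial f k (\<gamma> s)) a" and "\<And>k. isCont (\<lambda>s. partial g k (\<gamma> s)) a"
  shows "isCont (\<lambda>s. pbracket T A f g (\<gamma> s)) a"
  unfolding pbracket_def using assms by (intro continuous_intros)

section \<open>Restriction to a coordinate subspace\<close>

definition coord_proj :: "nat set \<Rightarrow> (nat \<Rightarrow> 'a::zero) \<Rightarrow> nat \<Rightarrow> 'a" where
  "coord_proj T x = (\<lambda>l. if l \<in> T then x l else 0)"

lemma coord_proj_fun_upd: "k \<in> T \<Longrightarrow> coord_proj T ((coord_proj T x)(k := t)) = coord_proj T (x(k := t))"
  unfolding coord_proj_def by auto

lemma kahan_eqs_coord_proj: "kahan_eqs T A (coord_proj T x) = kahan_eqs T A x"
  unfolding kahan_eqs_def coord_proj_def by (intro ext) (auto cong: sum.cong)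

lemma kahan_coord_proj: "kahan T A (coord_proj T x) = kahan T A x"
  unfolding kahan_def kahan_eqs_coord_proj ..

lemma kahan_defined_coord_proj: "kahan_defined T A (coord_proj T x) = kahan_defined T A x"
  unfolding kahan_defined_def kahan_eqs_coord_proj ..

lemma pbracket_coord_proj:
  assumes f: "\<And>x. f (coord_proj T x) = f x" and g: "\<And>x. g (coord_proj T x) = g x"
  shows "pbracket T A f g (coord_proj T x) = pbracket T A f g x"
proof -
  have partial_eq: "partial h k (coord_proj T x) = partial h k x"
    if h: "\<And>x. h (coord_proj T x) = h x" and k: "k \<in> T" for h :: "(nat \<Rightarrow> 'a) \<Rightarrow> 'a" and k
  proof -
    have "h ((coord_proj T x)(k := t)) = h (x(k := t))" for t
      by (metis h coord_proj_fun_upd[OF k])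
    then show ?thesis
      using k by (simp add: partial_def coord_proj_def)
  qed
  have "coord_proj T x k = x k" if "k \<in> T" for k
    using that by (simp add: coord_proj_def)
  then show ?thesis
    unfolding pbracket_def
    by (intro sum.cong refl) (simp add: partial_eq[of f, OF f] partial_eq[of g, OF g])
qed

lemma pbracket_vanishing_outside:
  assumes "finite S" and "T \<subseteq> S" and "\<And>l. l \<notin> T \<Longrightarrow> z l = 0"
  shows "pbracket S A f g z = pbracket T A f g z"
proof -
  have "pbracket S A f g z = (\<Sum>k\<in>S. \<Sum>l\<in>T. A k l * z k * z l * partial f k z * partial g l z)"
    unfolding pbracket_def using assms by (intro sum.cong refl sum.mono_neutral_right) auto
  also have "\<dots> = pbracket T A f g z"
    unfolding pbracket_def using assms by (intro sum.mono_neutral_right) auto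
  finally show ?thesis .
qed

definition decoupled :: "nat set \<Rightarrow> nat set \<Rightarrow> (nat \<Rightarrow> nat \<Rightarrow> 'a::comm_ring_1) \<Rightarrow> (nat \<Rightarrow> 'a) \<Rightarrow> bool"
  where "decoupled S T A z \<longleftrightarrow> (\<forall>l. l \<notin> T \<longrightarrow> z l = 0) \<and> (\<forall>i\<in>S - T. (\<Sum>j\<in>S. A i j * z j) \<noteq> 1)"

lemma kahan_eqs_decoupled:
  assumes S: "finite S" and TS: "T \<subseteq> S" and dec: "decoupled S T A z"
  shows "kahan_eqs S A z = kahan_eqs T A z"
proof
  fix y
  have z: "z l = 0" if "l \<notin> T" for l
    using dec that unfolding decoupled_def by blast
  have restrict_sums: "kahan_eqs S A z y \<longleftrightarrow> kahan_eqs T A z y" if y: "\<And>l. l \<notin> T \<Longrightarrow> y l = 0"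
  proof -
    have "(\<Sum>j\<in>S. A i j * w j) = (\<Sum>j\<in>T. A i j * w j)" if "\<And>l. l \<notin> T \<Longrightarrow> w l = 0" for i w
      using S TS that by (intro sum.mono_neutral_right) auto
    then show ?thesis
      unfolding kahan_eqs_def using TS y z by auto
  qed
  have "y l = 0" if eqs: "kahan_eqs S A z y" and l: "l \<notin> T" for l
  proof (cases "l \<in> S")
    case True
    have "y l - z l = y l * (\<Sum>j\<in>S. A l j * z j) + z l * (\<Sum>j\<in>S. A l j * y j)"
      using eqs True unfolding kahan_eqs_def by blast
    then have "y l * (1 - (\<Sum>j\<in>S. A l j * z j)) = 0"
      using z[OF l] by (simp add: algebra_simps)
    then show ?thesis
      using dec True l unfolding decoupled_def by auto
  qed (use eqs in \<open>auto simp: kahan_eqs_def\<close>)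
  then show "kahan_eqs S A z y = kahan_eqs T A z y"
    using restrict_sums unfolding kahan_eqs_def by blast
qed

lemma kahan_decoupled:
  assumes "finite S" and "T \<subseteq> S" and "decoupled S T A z"
  shows "kahan S A z = kahan T A z"
  unfolding kahan_def kahan_eqs_decoupled[OF assms] ..

lemma decoupled_fun_upd_eventually:
  fixes z :: "nat \<Rightarrow> 'a::real_normed_field"
  assumes S: "finite S" and dec: "decoupled S T A z" and k: "k \<in> T"
  shows "eventually (\<lambda>t. decoupled S T A (z(k := t))) (nhds (z k))"
proof -
  have "eventually (\<lambda>t. (\<Sum>j\<in>S. A i j * (z(k := t)) j) \<noteq> 1) (nhds (z k))" if "i \<in> S - T" for i
  proof (rule isCont_eventually_neq)
    show "isCont (\<lambda>t. \<Sum>j\<in>S. A i j * (z(k := t)) j) (z k)"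
      by (intro continuous_intros isCont_fun_upd_apply)
    show "(\<Sum>j\<in>S. A i j * (z(k := z k)) j) \<noteq> 1"
      using dec that unfolding decoupled_def by simp
  qed
  then have "eventually (\<lambda>t. \<forall>i\<in>S - T. (\<Sum>j\<in>S. A i j * (z(k := t)) j) \<noteq> 1) (nhds (z k))"
    using S by (intro eventually_ball_finite) auto
  then show ?thesis
    by eventually_elim (use dec k in \<open>auto simp: decoupled_def\<close>)
qed

lemma partial_kahan_decoupled:
  assumes S: "finite S" and TS: "T \<subseteq> S" and dec: "decoupled S T A z" and k: "k \<in> T"
  shows "partial (\<lambda>w. kahan S A w i) k z = partial (\<lambda>w. kahan T A w i) k z"
proof -
  have "eventually (\<lambda>t. kahan S A (z(k := t)) i = kahan T A (z(k := t)) i) (nhds (z k))"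
    using decoupled_fun_upd_eventually[OF S dec k]
    by eventually_elim (simp add: kahan_decoupled[OF S TS])
  then show ?thesis
    unfolding partial_def by (rule deriv_cong_ev) simp
qed

lemma kahan_poisson_at_decoupled:
  assumes S: "finite S" and TS: "T \<subseteq> S" and KP: "kahan_poisson S A"
    and dec: "decoupled S T A z" and defined: "kahan_defined T A z" and i: "i \<in> T" and j: "j \<in> T"
  shows "pbracket T A (\<lambda>w. kahan T A w i) (\<lambda>w. kahan T A w j) z
    = A i j * kahan T A z i * kahan T A z j"
proof -
  have z: "\<And>l. l \<notin> T \<Longrightarrow> z l = 0"
    using dec unfolding decoupled_def by blast
  have "kahan_defined S A z"
    using defined unfolding kahan_defined_def kahan_eqs_decoupled[OF S TS dec] .
  then have "pbracket S A (\<lambda>w. kahan S A w i) (\<lambda>w. kahan S A w j) z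
      = A i j * kahan S A z i * kahan S A z j"
    using KP i j TS unfolding kahan_poisson_def by blast
  moreover have "pbracket S A (\<lambda>w. kahan S A w i) (\<lambda>w. kahan S A w j) z
      = pbracket T A (\<lambda>w. kahan S A w i) (\<lambda>w. kahan S A w j) z"
    using S TS z by (rule pbracket_vanishing_outside)
  moreover have "pbracket T A (\<lambda>w. kahan S A w i) (\<lambda>w. kahan S A w j) z
      = pbracket T A (\<lambda>w. kahan T A w i) (\<lambda>w. kahan T A w j) z"
    unfolding pbracket_def
    by (intro sum.cong refl) (simp add: partial_kahan_decoupled[OF S TS dec])
  ultimately show ?thesis
    by (simp add: kahan_decoupled[OF S TS dec])
qed

lemma decoupled_scaled_eventually:
  fixes z :: "nat \<Rightarrow> 'a::real_normed_field"
  assumes S: "finite S" and z: "\<And>l. l \<notin> T \<Longrightarrow> z l = 0"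
  shows "eventually (\<lambda>s. decoupled S T A (\<lambda>l. (1 + s) * z l)) (at 0)"
proof -
  have "eventually (\<lambda>s. (1 + s) * c \<noteq> 1) (at 0)" for c :: 'a
  proof (cases "c = 1")
    case True
    show ?thesis
      using eventually_neq_at_within[of 0 0 UNIV] by eventually_elim (simp add: True)
  next
    case False
    have "((\<lambda>s. (1 + s) * c) \<longlongrightarrow> (1 + 0) * c) (at 0)"
      by (intro tendsto_intros)
    with False show ?thesis
      by (intro tendsto_imp_eventually_ne) auto
  qed
  moreover have "(\<Sum>j\<in>S. A i j * ((1 + s) * z j)) = (1 + s) * (\<Sum>j\<in>S. A i j * z j)" for i s
    by (simp add: sum_distrib_left algebra_simps)
  ultimately have "eventually (\<lambda>s. \<forall>i\<in>S - T. (\<Sum>j\<in>S. A i j * ((1 + s) * z j)) \<noteq> 1) (at 0)"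
    using S by (intro eventually_ball_finite) auto
  then show ?thesis
    by eventually_elim (use z in \<open>auto simp: decoupled_def\<close>)
qed

lemma kahan_poisson_subset:
  assumes S: "finite S" and TS: "T \<subseteq> S" and KP: "kahan_poisson S A"
  shows "kahan_poisson T A"
  unfolding kahan_poisson_def
proof (intro allI impI ballI)
  fix x i j assume defined: "kahan_defined T A x" and i: "i \<in> T" and j: "j \<in> T"
  have T: "finite T"
    using S TS by (rule finite_subset[rotated])
  define z where "z = coord_proj T x"
  define \<gamma> where "\<gamma> s = (\<lambda>l. (1 + s) * z l)" for s
  let ?\<Phi> = "\<lambda>s. pbracket T A (\<lambda>w. kahan T A w i) (\<lambda>w. kahan T A w j) (\<gamma> s)"
  let ?\<Psi> = "\<lambda>s. A i j * kahan T A (\<gamma> s) i * kahan T A (\<gamma> s) j"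
  have \<gamma>_0: "\<gamma> 0 = z"
    by (simp add: \<gamma>_def)
  have \<gamma>: "isCont (\<lambda>s. \<gamma> s l) 0" for l
    by (simp add: \<gamma>_def)
  have "kahan_defined T A (\<gamma> 0)"
    using defined by (simp add: \<gamma>_0 z_def kahan_defined_coord_proj)
  then have det: "det (kahan_mat T A (\<gamma> 0)) \<noteq> 0"
    unfolding kahan_defined_iff_det[OF T] .
  have "isCont ?\<Phi> 0"
    using isCont_kahan(2)[OF T _ det \<gamma>] i j by (intro isCont_pbracket T \<gamma>)
  moreover have "isCont ?\<Psi> 0"
    using isCont_kahan(1)[OF T _ det \<gamma>] i j by (intro continuous_intros)
  moreover have "eventually (\<lambda>s. ?\<Phi> s = ?\<Psi> s) (at 0)"
  proof -
    have "eventually (\<lambda>s. det (kahan_mat T A (\<gamma> s)) \<noteq> 0) (at 0)"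
      using isCont_eventually_neq[OF isCont_poly_fun[OF poly_fun_det_kahan_mat[OF T] \<gamma>] det]
      by (simp add: eventually_nhds_conv_at)
    moreover have "eventually (\<lambda>s. decoupled S T A (\<gamma> s)) (at 0)"
      unfolding \<gamma>_def using S by (rule decoupled_scaled_eventually) (simp add: z_def coord_proj_def)
    ultimately show ?thesis
      by eventually_elim
        (simp add: kahan_poisson_at_decoupled[OF S TS KP _ _ i j] kahan_defined_iff_det[OF T])
  qed
  ultimately have "?\<Phi> 0 = ?\<Psi> 0"
    by (rule isCont_eq_if_eventually_eq)
  then show "pbracket T A (\<lambda>w. kahan T A w i) (\<lambda>w. kahan T A w j) x
    = A i j * kahan T A x i * kahan T A x j"
    unfolding \<gamma>_0 z_def kahan_coord_proj
    by (simp add: pbracket_coord_proj kahan_coord_proj)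
qed

theorem proposition4p1:
  fixes S :: "nat set" and A :: "nat \<Rightarrow> nat \<Rightarrow> 'a::real_normed_field"
  assumes "skew_graph S A" and "kahan_poisson S A"
    and "S' \<subseteq> S" and "S' \<noteq> {}"
  shows "skew_graph S' A \<and> kahan_poisson S' A"
proof
  have S: "finite S"
    using assms(1) unfolding skew_graph_def by blast
  show "skew_graph S' A"
    using assms(1,3,4) finite_subset[OF assms(3) S] unfolding skew_graph_def by blast
  show "kahan_poisson S' A"
    using S assms(3,2) by (rule kahan_poisson_subset)
qed

end
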